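(* Let $A$ be a Boolean algebra (an associative ring with unity satisfying $x^2=x$ for all $x$), and let $X\subseteq A$ be a subset closed under $x\mapsto 1-x$ and with $0\in X$. Then for all $n\ge 0$: 1) $\mathcal{R}^n(X)\subseteq\mathcal{D}^{2n}(X)$, and 2) $\mathcal{D}^n(X)\subseteq\mathcal{V}_{2^{2^n}}(\mathcal{I}_{2^n}(X))$.
   Context: For $Y\subseteq A$: $\mathcal{R}(Y)=Y\cup\{-1,0,1\}\cup\{x+y: x,y\in Y\}\cup\{xy: x,y\in Y\}$; $\mathcal{D}(Y)=Y\cup\{0,1\}\cup\{x+y : x,y\in Y,\ xy=0\}\cup\{xy: x,y\in Y\}$; $\mathcal{I}_k(Y)=\{x_1x_2\cdots x_k : x_1,\dots,x_k\in Y\}$; $\mathcal{V}_k(Y)=\{x_1+\dots+x_k : x_1,\dots,x_k\in Y,\ x_ix_j=0 \text{ for all } i\neq j\}$. Powers $\mathcal{R}^n,\mathcal{D}^n$ denote $n$-fold iteration (with $\mathcal{R}^0(Y)=\mathcal{D}^0(Y)=Y$). *)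

theory Defs
  imports Main
begin

definition Rop :: "'a::ring_1 set \<Rightarrow> 'a set" where
  "Rop Y = Y \<union> {-1, 0, 1} \<union> {x + y | x y. x \<in> Y \<and> y \<in> Y} \<union> {x * y | x y. x \<in> Y \<and> y \<in> Y}"

definition Dop :: "'a::ring_1 set \<Rightarrow> 'a set" where
  "Dop Y = Y \<union> {0, 1} \<union> {x + y | x y. x \<in> Y \<and> y \<in> Y \<and> x * y = 0}
             \<union> {x * y | x y. x \<in> Y \<and> y \<in> Y}"

definition Iop :: "nat \<Rightarrow> 'a::ring_1 set \<Rightarrow> 'a set" where
  "Iop k Y = {prod_list xs | xs. length xs = k \<and> set xs \<subseteq> Y}"

definition Vop :: "nat \<Rightarrow> 'a::ring_1 set \<Rightarrow> 'a set" where
  "Vop k Y = {sum_list xs | xs. length xs = k \<and> set xs \<subseteq> Y \<and>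
               (\<forall>i<k. \<forall>j<k. i \<noteq> j \<longrightarrow> xs ! i * xs ! j = 0)}"

end

theory Submission
  imports Defs
begin

text \<open>A Boolean ring is commutative of characteristic 2, so on a set closed under
  \<open>x \<mapsto> 1 - x\<close> the identities \<open>x + y = x(1 - y) + (1 - x)y\<close>, \<open>1 - (x + y) = xy + (1 - x)(1 - y)\<close>
  and \<open>1 - xy = (1 - x) + x(1 - y)\<close> write sums and complements as orthogonal sums of products:
  one \<open>Rop\<close> step costs two \<open>Dop\<close> steps and complement-closure is kept.

  If \<open>a\<close> is a summand of \<open>x\<close> then \<open>a x = a\<close>, so \<open>xy = 0\<close> makes all summands of \<open>x\<close>
  orthogonal to those of \<open>y\<close> and \<open>x + y\<close> is an orthogonal sum of \<open>2M\<close> terms, while \<open>xy\<close>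
  multiplies out into \<open>M\<^sup>2\<close> pairwise orthogonal \<open>2N\<close>-fold products. Padding with zero summands and
  repeated factors (idempotence) brings every case to exactly \<open>M\<^sup>2\<close> summands of \<open>2N\<close> factors.\<close>

definition orthogonal :: "'a::ring_1 \<Rightarrow> 'a \<Rightarrow> bool" where
  "orthogonal a b \<longleftrightarrow> a * b = 0 \<and> b * a = 0"

lemma orthogonal_zero [simp]: "orthogonal a 0" "orthogonal 0 a"
  by (simp_all add: orthogonal_def)

text \<open>As \<^const>\<open>orthogonal\<close> is symmetric, \<open>sorted_wrt orthogonal\<close> means pairwise orthogonality.\<close>

lemma Vop_conv_sorted_wrt:
  "Vop k Y = {sum_list xs | xs. length xs = k \<and> set xs \<subseteq> Y \<and> sorted_wrt orthogonal xs}"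
proof -
  have "sorted_wrt orthogonal xs \<longleftrightarrow>
      (\<forall>i<length xs. \<forall>j<length xs. i \<noteq> j \<longrightarrow> xs ! i * xs ! j = 0)" for xs :: "'a list"
    unfolding sorted_wrt_iff_nth_less orthogonal_def by (auto simp: linorder_neq_iff)
  then show ?thesis
    unfolding Vop_def by auto
qed

lemma sorted_wrt_orthogonal_replicate_zero: "sorted_wrt orthogonal (replicate n 0)"
  by (induction n) auto

lemma Vop_mono: "Y \<subseteq> Z \<Longrightarrow> Vop k Y \<subseteq> Vop k Z"
  unfolding Vop_conv_sorted_wrt by blast

lemma Vop_mono_length:
  assumes "0 \<in> Y" and "k \<le> m"
  shows "Vop k Y \<subseteq> Vop m Y"
proof
  fix x assume "x \<in> Vop k Y"
  then obtain xs where xs: "x = sum_list xs" "length xs = k" "set xs \<subseteq> Y" "sorted_wrt orthogonal xs"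
    unfolding Vop_conv_sorted_wrt by blast
  let ?ys = "xs @ replicate (m - k) 0"
  have "x = sum_list ?ys" "length ?ys = m" "set ?ys \<subseteq> Y" "sorted_wrt orthogonal ?ys"
    using xs assms by (auto simp: sorted_wrt_append sorted_wrt_orthogonal_replicate_zero sum_list_replicate)
  then show "x \<in> Vop m Y"
    unfolding Vop_conv_sorted_wrt by blast
qed

lemma Vop_one: "Vop 1 Y = Y"
  unfolding Vop_conv_sorted_wrt by (force simp: length_Suc_conv)

lemma Iop_one: "Iop 1 X = X"
  unfolding Iop_def by (force simp: length_Suc_conv)

lemma Iop_mult:
  assumes "a \<in> Iop k X" and "b \<in> Iop m X"
  shows "a * b \<in> Iop (k + m) X"
proof -
  obtain xs ys where "a = prod_list xs" "length xs = k" "set xs \<subseteq> X"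
    and "b = prod_list ys" "length ys = m" "set ys \<subseteq> X"
    using assms unfolding Iop_def by blast
  then have "a * b = prod_list (xs @ ys) \<and> length (xs @ ys) = k + m \<and> set (xs @ ys) \<subseteq> X"
    by simp
  then show ?thesis
    unfolding Iop_def by blast
qed

lemma sum_list_products:
  "sum_list [a * b. a \<leftarrow> as, b \<leftarrow> bs] = sum_list as * sum_list (bs :: 'a::semiring_0 list)"
  by (induction as) (simp_all add: sum_list_const_mult[where f = "\<lambda>x. x", simplified] distrib_right)

lemma Dop_mono: "Y \<subseteq> Z \<Longrightarrow> Dop Y \<subseteq> Dop Z"
  unfolding Dop_def by blast

lemma Dop_subsetI:
  assumes "Y \<subseteq> T" and "0 \<in> T" "1 \<in> T"
    and "\<And>x y. x \<in> Y \<Longrightarrow> y \<in> Y \<Longrightarrow> x * y = 0 \<Longrightarrow> x + y \<in> T"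
    and "\<And>x y. x \<in> Y \<Longrightarrow> y \<in> Y \<Longrightarrow> x * y \<in> T"
  shows "Dop Y \<subseteq> T"
  using assms unfolding Dop_def by blast

lemma Dop_Dop_add_mult:
  assumes "a \<in> W" "b \<in> W" "c \<in> W" "d \<in> W" and "(a * b) * (c * d) = 0"
  shows "a * b + c * d \<in> Dop (Dop W)"
  using assms unfolding Dop_def by blast

context
  assumes idem: "\<And>x :: 'a::ring_1. x * x = x"
begin

lemma boolean_add_self: "x + x = (0::'a)"
proof -
  have "(x + x) + (x + x) = (x + x) * (x + x)"
    by (simp only: distrib_left distrib_right idem[of x])
  also have "\<dots> = x + x"
    by (rule idem)
  finally show ?thesis
    by (simp only: add_cancel_left_left)
qed

lemma boolean_minus: "- x = (x::'a)"
  using boolean_add_self[of x] by (simp add: add_eq_0_iff)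

lemma boolean_mult_commute: "x * y = y * (x::'a)"
proof -
  have "(x * y + y * x) + (x + y) = (x + y) * (x + y)"
    by (simp add: algebra_simps idem[of x] idem[of y])
  also have "\<dots> = x + y"
    by (rule idem)
  finally have "x * y + y * x = 0"
    by (simp only: add_cancel_left_left)
  then show ?thesis
    by (simp add: add_eq_0_iff boolean_minus)
qed

lemma boolean_mult_exchange: "(a * b) * (c * d) = (a * c) * (b * (d::'a))"
  by (metis boolean_mult_commute mult.assoc)

lemma boolean_mult_complement: "x * (1 - x) = (0::'a)" "(1 - x) * x = 0"
  by (simp_all add: algebra_simps idem)

lemma boolean_power: "x ^ Suc n = (x::'a)"
  by (induction n) (simp_all add: idem)

lemma Rop_subset_Dop_Dop:
  assumes "Y \<union> (-) 1 ` Y \<subseteq> W"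
  shows "Rop Y \<union> (-) 1 ` Rop Y \<subseteq> Dop (Dop (W::'a set))"
proof -
  have W_DD: "W \<subseteq> Dop (Dop W)" and D_DD: "Dop W \<subseteq> Dop (Dop W)"
    unfolding Dop_def by blast+
  have "z \<in> Dop (Dop W) \<and> 1 - z \<in> Dop (Dop W)" if "z \<in> Rop Y" for z
  proof -
    from that consider "z \<in> Y" | "z \<in> {-1, 0, 1}"
      | x y where "x \<in> Y" "y \<in> Y" "z = x + y" | x y where "x \<in> Y" "y \<in> Y" "z = x * y"
      unfolding Rop_def by blast
    then show ?thesis
    proof cases
      case 1
      then show ?thesis using assms W_DD by blast
    next
      case 2
      then have "z \<in> {0, 1} \<and> 1 - z \<in> {0, 1}"
        by (auto simp: boolean_minus)
      then show ?thesis using D_DD unfolding Dop_def by blast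
    next
      case (3 x y)
      then have W: "x \<in> W" "y \<in> W" "1 - x \<in> W" "1 - y \<in> W"
        using assms by blast+
      have "z = x * (1 - y) + (1 - x) * y"
        using 3 boolean_add_self[of "x * y"] by (simp add: algebra_simps)
      moreover have "(x * (1 - y)) * ((1 - x) * y) = 0"
        by (simp only: boolean_mult_exchange[of x] boolean_mult_complement mult_zero_left)
      moreover have "1 - z = x * y + (1 - x) * (1 - y)"
        using 3 boolean_add_self[of "x * y"] by (simp add: algebra_simps)
      moreover have "(x * y) * ((1 - x) * (1 - y)) = 0"
        by (simp only: boolean_mult_exchange[of x y] boolean_mult_complement mult_zero_left)
      ultimately show ?thesis
        using W Dop_Dop_add_mult by metis
    next
      case (4 x y)
      then have W: "x \<in> W" "y \<in> W" "1 - x \<in> W" "1 - y \<in> W"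
        using assms by blast+
      \<comment> \<open>\<open>1 - x\<close> is written as a product so that \<open>Dop_Dop_add_mult\<close> applies\<close>
      have "1 - z = (1 - x) * (1 - x) + x * (1 - y)"
        using 4 by (simp add: algebra_simps idem)
      moreover have "((1 - x) * (1 - x)) * (x * (1 - y)) = 0"
        by (simp add: idem boolean_mult_complement mult.assoc[symmetric])
      moreover have "z \<in> Dop W"
        using 4 W unfolding Dop_def by blast
      ultimately show ?thesis
        using W D_DD Dop_Dop_add_mult by auto
    qed
  qed
  then show ?thesis
    by blast
qed

lemma Iop_mono_length:
  assumes "0 < k" and "k \<le> m"
  shows "Iop k X \<subseteq> Iop m (X::'a set)"
proof
  fix p assume "p \<in> Iop k X"
  then obtain xs where xs: "p = prod_list xs" "length xs = k" "set xs \<subseteq> X"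
    unfolding Iop_def by blast
  with assms obtain a ys where a_ys: "xs = a # ys"
    by (cases xs) auto
  let ?zs = "replicate (m - k) a @ xs"
  have "prod_list ?zs = p"
    using xs(1) a_ys by (simp add: mult.assoc[symmetric] power_Suc2[symmetric] boolean_power del: power_Suc)
  moreover have "length ?zs = m" "set ?zs \<subseteq> X"
    using xs a_ys assms by auto
  ultimately show "p \<in> Iop m X"
    unfolding Iop_def by blast
qed

lemma Vop_Iop_mono:
  assumes "0 \<in> X" and "0 < p" "p \<le> q" and "k \<le> m"
  shows "Vop k (Iop p X) \<subseteq> Vop m (Iop q (X::'a set))"
proof -
  have "0 \<in> Iop q X"
    using assms Iop_mono_length[of 1 q X, unfolded Iop_one] by auto
  then show ?thesis
    using assms Iop_mono_length Vop_mono Vop_mono_length by (metis order.trans)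
qed

lemma mult_sum_list_orthogonal:
  assumes "sorted_wrt orthogonal xs" and "a \<in> set xs"
  shows "a * sum_list xs = (a::'a)"
  using assms
proof (induction xs)
  case (Cons b xs)
  show ?case
  proof (cases "a = b")
    case True
    with Cons.prems have "a * sum_list xs = 0"
      by (induction xs) (auto simp: orthogonal_def distrib_left)
    with True show ?thesis
      by (simp add: distrib_left idem)
  next
    case False
    with Cons show ?thesis
      by (auto simp: orthogonal_def distrib_left)
  qed
qed simp

lemma Vop_add:
  assumes "x \<in> Vop k Y" "y \<in> Vop m Y" and "x * y = (0::'a)"
  shows "x + y \<in> Vop (k + m) Y"
proof -
  obtain as where as: "x = sum_list as" "length as = k" "set as \<subseteq> Y" "sorted_wrt orthogonal as"
    using assms(1) unfolding Vop_conv_sorted_wrt by blast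
  obtain bs where bs: "y = sum_list bs" "length bs = m" "set bs \<subseteq> Y" "sorted_wrt orthogonal bs"
    using assms(2) unfolding Vop_conv_sorted_wrt by blast
  have "orthogonal a b" if "a \<in> set as" "b \<in> set bs" for a b
  proof -
    have "a * x = a" "y * b = b"
      using mult_sum_list_orthogonal[OF as(4) that(1)] mult_sum_list_orthogonal[OF bs(4) that(2)]
      by (simp_all add: as(1) bs(1) boolean_mult_commute[of _ b])
    then have "a * b = (a * x) * (y * b)"
      by simp
    also have "\<dots> = a * (x * y) * b"
      by (simp only: mult.assoc)
    also have "\<dots> = 0"
      using assms(3) by simp
    finally show ?thesis
      unfolding orthogonal_def by (simp add: boolean_mult_commute[of b])
  qed
  then have "x + y = sum_list (as @ bs) \<and> length (as @ bs) = k + m \<and> set (as @ bs) \<subseteq> Y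
      \<and> sorted_wrt orthogonal (as @ bs)"
    using as bs by (simp add: sorted_wrt_append)
  then show ?thesis
    unfolding Vop_conv_sorted_wrt by blast
qed

lemma orthogonal_mult_mult:
  assumes "orthogonal a c \<or> orthogonal b d"
  shows "orthogonal (a * b) (c * (d::'a))"
  using assms unfolding orthogonal_def
  by (auto simp: boolean_mult_exchange[of a b] boolean_mult_exchange[of c d])

lemma sorted_wrt_orthogonal_products:
  assumes "sorted_wrt orthogonal as" and "sorted_wrt orthogonal bs"
  shows "sorted_wrt orthogonal [a * b. a \<leftarrow> as, b \<leftarrow> (bs::'a list)]"
  using assms(1)
proof (induction as)
  case (Cons a as)
  have "sorted_wrt orthogonal (map ((*) a) bs)"
    unfolding sorted_wrt_map
    by (rule sorted_wrt_mono_rel[OF _ assms(2)]) (simp add: orthogonal_mult_mult)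
  moreover have "sorted_wrt orthogonal [c * d. c \<leftarrow> as, d \<leftarrow> bs]"
    using Cons by simp
  moreover have "orthogonal (a * b) (c * d)" if "c \<in> set as" for b c d
    using Cons.prems that by (simp add: orthogonal_mult_mult)
  ultimately show ?case
    by (auto simp: sorted_wrt_append)
qed simp

lemma Vop_mult:
  assumes "x \<in> Vop k Y" and "y \<in> Vop m Z"
  shows "x * y \<in> Vop (k * m) {a * b | a b. a \<in> Y \<and> (b::'a) \<in> Z}"
proof -
  obtain as where as: "x = sum_list as" "length as = k" "set as \<subseteq> Y" "sorted_wrt orthogonal as"
    using assms(1) unfolding Vop_conv_sorted_wrt by blast
  obtain bs where bs: "y = sum_list bs" "length bs = m" "set bs \<subseteq> Z" "sorted_wrt orthogonal bs"
    using assms(2) unfolding Vop_conv_sorted_wrt by blast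
  let ?ps = "[a * b. a \<leftarrow> as, b \<leftarrow> bs]"
  have "x * y = sum_list ?ps" "length ?ps = k * m" "set ?ps \<subseteq> {a * b | a b. a \<in> Y \<and> b \<in> Z}"
    using as bs by (auto simp: sum_list_products length_concat sum_list_triv o_def)
  moreover have "sorted_wrt orthogonal ?ps"
    using as(4) bs(4) by (rule sorted_wrt_orthogonal_products)
  ultimately show ?thesis
    unfolding Vop_conv_sorted_wrt by blast
qed

lemma Dop_Vop_Iop_subset:
  assumes "0 \<in> X" "1 \<in> X" and "0 < N" "2 \<le> M"
  shows "Dop (Vop M (Iop N X)) \<subseteq> Vop (M * M) (Iop (2 * N) (X::'a set))"
proof (rule Dop_subsetI)
  have "M + M \<le> M * M"
    using mult_le_mono1[OF assms(4), of M] by (simp add: mult_2)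
  then have M: "M \<le> M * M" "M + M \<le> M * M" "1 \<le> M * M"
    using assms(4) by linarith+
  have V_T: "Vop k (Iop N X) \<subseteq> Vop (M * M) (Iop (2 * N) X)" if "k \<le> M * M" for k
    using Vop_Iop_mono[OF assms(1,3), of "2 * N" k "M * M"] that by simp
  have X_T: "X \<subseteq> Vop (M * M) (Iop (2 * N) X)"
    using Vop_Iop_mono[OF assms(1), of 1 "2 * N" 1 "M * M", unfolded Iop_one Vop_one] assms(3) M(3)
    by simp
  have products: "{a * b | a b. a \<in> Iop N X \<and> b \<in> Iop N X} \<subseteq> Iop (2 * N) X"
    using Iop_mult[of _ N X _ N] unfolding mult_2 by blast
  show "Vop M (Iop N X) \<subseteq> Vop (M * M) (Iop (2 * N) X)"
    using V_T[OF M(1)] .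
  show "0 \<in> Vop (M * M) (Iop (2 * N) X)" "1 \<in> Vop (M * M) (Iop (2 * N) X)"
    using X_T assms(1,2) by blast+
  show "x + y \<in> Vop (M * M) (Iop (2 * N) X)"
    if "x \<in> Vop M (Iop N X)" "y \<in> Vop M (Iop N X)" "x * y = 0" for x y
    using Vop_add[OF that] V_T[OF M(2)] by blast
  show "x * y \<in> Vop (M * M) (Iop (2 * N) X)"
    if "x \<in> Vop M (Iop N X)" "y \<in> Vop M (Iop N X)" for x y
    using Vop_mult[OF that] Vop_mono[OF products] by blast
qed

lemma funpow_Rop_subset_Dop:
  assumes "(-) 1 ` X \<subseteq> X"
  shows "(Rop ^^ n) X \<union> (-) 1 ` (Rop ^^ n) X \<subseteq> (Dop ^^ (2 * n)) (X::'a set)"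
proof (induction n)
  case 0
  then show ?case using assms by simp
next
  case (Suc n)
  have "(Dop ^^ (2 * Suc n)) X = Dop (Dop ((Dop ^^ (2 * n)) X))"
    by simp
  then show ?case
    using Rop_subset_Dop_Dop[OF Suc.IH] by simp
qed

lemma funpow_Dop_subset_Vop_Iop:
  assumes "0 \<in> X" "1 \<in> X"
  shows "(Dop ^^ n) X \<subseteq> Vop (2 ^ 2 ^ n) (Iop (2 ^ n) (X::'a set))"
proof (induction n)
  case 0
  show ?case
    using Vop_Iop_mono[of X 1 1 1 2, unfolded Iop_one Vop_one] assms by (simp add: Iop_one[simplified])
next
  case (Suc n)
  have "2 \<le> (2::nat) ^ 2 ^ n"
    using power_increasing[of 1 "2 ^ n" "2::nat"] by simp
  have "(Dop ^^ Suc n) X \<subseteq> Dop (Vop (2 ^ 2 ^ n) (Iop (2 ^ n) X))"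
    using Dop_mono[OF Suc.IH] by simp
  also have "\<dots> \<subseteq> Vop (2 ^ 2 ^ n * 2 ^ 2 ^ n) (Iop (2 * 2 ^ n) X)"
    using Dop_Vop_Iop_subset[OF assms] \<open>2 \<le> 2 ^ 2 ^ n\<close> by simp
  also have "\<dots> = Vop (2 ^ 2 ^ Suc n) (Iop (2 ^ Suc n) X)"
    by (simp add: mult_2 power_add)
  finally show ?case .
qed

end

theorem mainTheorem7:
  fixes X :: "'a::ring_1 set"
  assumes idem: "\<forall>x::'a. x * x = x"
    and compl: "\<forall>x\<in>X. 1 - x \<in> X"
    and zero: "0 \<in> X"
  shows "\<forall>n::nat. (Rop ^^ n) X \<subseteq> (Dop ^^ (2 * n)) X
            \<and> (Dop ^^ n) X \<subseteq> Vop (2 ^ (2 ^ n)) (Iop (2 ^ n) X)"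
proof -
  have boolean: "\<And>x::'a. x * x = x"
    using idem by blast
  have "(-) 1 ` X \<subseteq> X" and "1 \<in> X"
    using compl zero by force+
  then show ?thesis
    using funpow_Rop_subset_Dop[OF boolean] funpow_Dop_subset_Vop_Iop[OF boolean zero] by blast
qed

end
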